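(* Let $(X,\|\cdot\|)$ and $(Y,\|\cdot\|)$ be finite-dimensional normed vector spaces and let $T$ be a $Y$-multivalued map on $X$ with $T(u)\neq\varnothing$ for every $u\in X$ which is weakly continuous at every point of $X$. Then $\{x\in X:T(x)\text{ is a singleton}\}$ and $\mathrm{dmn}\,\mathrm{D}T$ are Borel subsets of $X$, and $\mathrm{D}T:\mathrm{dmn}\,\mathrm{D}T\to\mathrm{Hom}(X,Y)$ is a Borel function.
   Context: A $Y$-multivalued map $T$ on $X$ assigns to each $x\in X$ a subset $T(x)\subseteq Y$; if $T(x)$ is a singleton, $T(x)$ also denotes its unique element. $T$ is weakly continuous at $x$ if for every $\varepsilon>0$ there is $\delta>0$ such that $T(y)\subseteq T(x)+\{v\in Y:\|v\|<\varepsilon\}$ whenever $\|y-x\|<\delta$. $T$ is strongly differentiable at $x$ if $T(x)$ is a singleton and there is a linear map $L:X\to Y$ such that for every $\varepsilon>0$ there is $\delta>0$ with $\|w-T(x)-L(y-x)\|\le\varepsilon\|y-x\|$ whenever $\|x-y\|\le\delta$ and $w\in T(y)$; such $L$ is unique and denoted $\mathrm{D}T(x)$, and $\mathrm{dmn}\,\mathrm{D}T$ is the set of points where $T$ is strongly differentiable. *)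

theory Defs
  imports "HOL-Analysis.Analysis"
begin

text \<open>A Y-multivalued map on X is modelled as T :: 'a \<Rightarrow> 'b set.\<close>

definition weakly_continuous_at :: "('a::real_normed_vector \<Rightarrow> 'b::real_normed_vector set) \<Rightarrow> 'a \<Rightarrow> bool" where
  "weakly_continuous_at T x \<longleftrightarrow>
     (\<forall>\<epsilon>>0. \<exists>\<delta>>0. \<forall>y. norm (y - x) < \<delta> \<longrightarrow>
        T y \<subseteq> {a + v | a v. a \<in> T x \<and> norm v < \<epsilon>})"

definition strongly_diff_with :: "('a::real_normed_vector \<Rightarrow> 'b::real_normed_vector set) \<Rightarrow> 'a \<Rightarrow> ('a \<Rightarrow> 'b) \<Rightarrow> bool" where
  "strongly_diff_with T x L \<longleftrightarrow> is_singleton (T x) \<and> linear L \<and>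
     (\<forall>\<epsilon>>0. \<exists>\<delta>>0. \<forall>y w. norm (x - y) \<le> \<delta> \<and> w \<in> T y \<longrightarrow>
        norm (w - the_elem (T x) - L (y - x)) \<le> \<epsilon> * norm (y - x))"

definition dmn_D :: "('a::real_normed_vector \<Rightarrow> 'b::real_normed_vector set) \<Rightarrow> 'a set" where
  "dmn_D T = {x. \<exists>L. strongly_diff_with T x L}"

text \<open>The strong derivative, as an element of Hom(X,Y) (bounded = all linear maps in finite dimensions).\<close>
definition D :: "('a::real_normed_vector \<Rightarrow> 'b::real_normed_vector set) \<Rightarrow> 'a \<Rightarrow> ('a \<Rightarrow>\<^sub>L 'b)" where
  "D T x = (THE L. strongly_diff_with T x (blinfun_apply L))"

end

theory Submission
  imports Defs
begin

text \<open>
  The points where T is single-valued form a G-delta set: by weak continuity, the set of points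
  at which any two values of T are closer than 1/(n+1) is open.

  Weak continuity also makes each approx_set T L s r closed relative to the single-valued points,
  hence Borel, and strong differentiability at x with derivative L says that x lies in
  approx_set T L e r for every e > 0 and some r > 0. Letting L range over a countable dense subset
  of the finite-dimensional space Hom(X, Y), and using its completeness to recover the derivative
  as a limit of approximating maps, both dmn D T and the preimages of closed balls under D T become
  countable unions and intersections of such sets.
\<close>

section \<open>Finite-dimensional normed spaces\<close>

lemma infdist_subspace_le:
  fixes a y :: "'a::real_normed_vector"
  assumes "subspace S" "y \<in> S"
  shows "\<bar>t\<bar> * infdist a S \<le> norm (y + t *\<^sub>R a)"
proof (cases "t = 0")
  case False
  have "- (1 / t) *\<^sub>R y \<in> S"
    using assms by (simp add: subspace_neg subspace_scale)
  then have "infdist a S \<le> dist a (- (1 / t) *\<^sub>R y)"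
    by (rule infdist_le)
  also have "\<dots> = norm (y + t *\<^sub>R a) / \<bar>t\<bar>"
  proof -
    have "a + (1 / t) *\<^sub>R y = (1 / t) *\<^sub>R (y + t *\<^sub>R a)"
      using False by (simp add: algebra_simps)
    then show ?thesis by (simp add: dist_norm)
  qed
  finally show ?thesis
    using False by (simp add: field_simps)
qed simp

lemma Cauchy_if_dist_le_null:
  fixes X :: "nat \<Rightarrow> 'a::metric_space"
  assumes "e \<longlonglongrightarrow> 0" "\<And>m n. dist (X m) (X n) \<le> e m + e n"
  shows "Cauchy X"
proof (rule metric_CauchyI)
  fix \<epsilon> :: real assume "\<epsilon> > 0"
  then obtain N where N: "\<And>n. n \<ge> N \<Longrightarrow> norm (e n - 0) < \<epsilon> / 2"
    using assms(1) LIMSEQ_D half_gt_zero by blast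
  have "dist (X m) (X n) < \<epsilon>" if "m \<ge> N" "n \<ge> N" for m n
    using assms(2)[of m n] N[OF that(1)] N[OF that(2)] by simp
  then show "\<exists>M. \<forall>m\<ge>M. \<forall>n\<ge>M. dist (X m) (X n) < \<epsilon>"
    by blast
qed

lemma Cauchy_if_dist_le_mult:
  assumes "Cauchy X" "\<And>m n. dist (Y m) (Y n) \<le> K * dist (X m) (X n)"
  shows "Cauchy Y"
proof (rule metric_CauchyI)
  fix \<epsilon> :: real assume "\<epsilon> > 0"
  then obtain M where M: "\<And>m n. m \<ge> M \<Longrightarrow> n \<ge> M \<Longrightarrow> dist (X m) (X n) < \<epsilon> / (\<bar>K\<bar> + 1)"
    using metric_CauchyD[OF assms(1), of "\<epsilon> / (\<bar>K\<bar> + 1)"] by auto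
  have "dist (Y m) (Y n) < \<epsilon>" if "m \<ge> M" "n \<ge> M" for m n
  proof -
    have "dist (Y m) (Y n) \<le> (\<bar>K\<bar> + 1) * dist (X m) (X n)"
      using assms(2)[of m n] mult_right_mono[of K "\<bar>K\<bar> + 1" "dist (X m) (X n)"] by force
    also have "\<dots> < \<epsilon>"
      using M[OF that] by (simp add: field_simps add_pos_nonneg)
    finally show ?thesis .
  qed
  then show "\<exists>M. \<forall>m\<ge>M. \<forall>n\<ge>M. dist (Y m) (Y n) < \<epsilon>"
    by blast
qed

definition representation_bounded :: "'a::real_normed_vector set \<Rightarrow> bool" where
  "representation_bounded B \<longleftrightarrow>
     (\<exists>K\<ge>0. \<forall>x\<in>span B. \<forall>b. \<bar>representation B x b\<bar> \<le> K * norm x)"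

lemma Cauchy_in_span_convergent:
  fixes X :: "nat \<Rightarrow> 'a::real_normed_vector"
  assumes B: "finite B" "independent B" "representation_bounded B"
    and X: "\<And>n. X n \<in> span B" "Cauchy X"
  obtains l where "l \<in> span B" "X \<longlonglongrightarrow> l"
proof -
  obtain K where K: "\<And>x b. x \<in> span B \<Longrightarrow> \<bar>representation B x b\<bar> \<le> K * norm x"
    using B(3) unfolding representation_bounded_def by blast
  have "Cauchy (\<lambda>n. representation B (X n) b)" for b
  proof (rule Cauchy_if_dist_le_mult[OF X(2)])
    fix m n
    have "representation B (X m) b - representation B (X n) b = representation B (X m - X n) b"
      using representation_diff[OF B(2) X(1) X(1)] by simp
    then show "dist (representation B (X m) b) (representation B (X n) b) \<le> K * dist (X m) (X n)"
      using K[of "X m - X n" b] X(1) by (simp add: dist_norm dist_real_def span_diff)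
  qed
  then obtain r where r: "\<And>b. (\<lambda>n. representation B (X n) b) \<longlonglongrightarrow> r b"
    unfolding Cauchy_convergent_iff convergent_def by metis
  have "X n = (\<Sum>b\<in>B. representation B (X n) b *\<^sub>R b)" for n
    using sum_representation_eq[of B "X n" B] B X by simp
  moreover have "(\<lambda>n. \<Sum>b\<in>B. representation B (X n) b *\<^sub>R b) \<longlonglongrightarrow> (\<Sum>b\<in>B. r b *\<^sub>R b)"
    by (intro tendsto_intros r)
  moreover have "(\<Sum>b\<in>B. r b *\<^sub>R b) \<in> span B"
    by (intro span_sum span_scale span_base)
  ultimately show ?thesis
    using that by simp
qed

lemma closed_span_if_representation_bounded:
  fixes B :: "'a::real_normed_vector set"
  assumes "finite B" "independent B" "representation_bounded B"
  shows "closed (span B)"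
  unfolding closed_sequential_limits
proof (intro allI impI, elim conjE)
  fix X l assume X: "\<forall>n. X n \<in> span B" "X \<longlonglongrightarrow> l"
  then obtain l' where "l' \<in> span B" "X \<longlonglongrightarrow> l'"
    using Cauchy_in_span_convergent[OF assms] LIMSEQ_imp_Cauchy by blast
  with X(2) show "l \<in> span B"
    using LIMSEQ_unique by blast
qed

lemma representation_insert:
  assumes ind: "independent (insert a B)" and "a \<notin> B" and y: "y \<in> span B"
  shows "representation (insert a B) (y + t *\<^sub>R a) b
    = representation B y b + (if b = a then t else 0)"
proof -
  have yB: "y \<in> span (insert a B)"
    using y span_mono[of B "insert a B"] by blast
  have aB: "t *\<^sub>R a \<in> span (insert a B)"
    by (simp add: span_base span_scale)
  have "representation (insert a B) (y + t *\<^sub>R a) b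
      = representation (insert a B) y b + t * representation (insert a B) a b"
    using representation_add[OF ind aB yB] representation_scale[OF ind span_base] by simp
  also have "\<dots> = representation B y b + (if b = a then t else 0)"
    using representation_extend[OF ind y subset_insertI] representation_basis[OF ind insertI1]
    by simp
  finally show ?thesis .
qed

lemma representation_bounded_insert:
  fixes B :: "'a::real_normed_vector set"
  assumes ind: "independent (insert a B)" and "a \<notin> B"
    and B: "closed (span B)" "representation_bounded B"
  shows "representation_bounded (insert a B)"
proof -
  obtain K where K: "K \<ge> 0" "\<And>y b. y \<in> span B \<Longrightarrow> \<bar>representation B y b\<bar> \<le> K * norm y"
    using B(2) unfolding representation_bounded_def by blast
  have "independent B" "a \<notin> span B"
    using ind \<open>a \<notin> B\<close> by (auto simp: independent_insert)
  \<comment> \<open>The new coordinate is controlled by the distance from a to the closed subspace span B.\<close>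
  define d where "d = infdist a (span B)"
  have "d > 0"
    unfolding d_def using infdist_pos_not_in_closed[OF B(1)] \<open>a \<notin> span B\<close> span_zero by blast
  define K' where "K' = K * (1 + norm a / d) + 1 / d"
  have "\<bar>representation (insert a B) x b\<bar> \<le> K' * norm x" if "x \<in> span (insert a B)" for x b
  proof -
    obtain t where "x - t *\<^sub>R a \<in> span B"
      using \<open>x \<in> span (insert a B)\<close> by (subst (asm) span_insert) blast
    define y where "y = x - t *\<^sub>R a"
    have y: "y \<in> span B" and x: "x = y + t *\<^sub>R a"
      using \<open>x - t *\<^sub>R a \<in> span B\<close> by (simp_all add: y_def)
    have "\<bar>t\<bar> * d \<le> norm x"
      unfolding x d_def using infdist_subspace_le[OF subspace_span y] .
    then have t: "\<bar>t\<bar> \<le> norm x / d"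
      using \<open>d > 0\<close> by (simp add: field_simps)
    have "norm y \<le> norm x + \<bar>t\<bar> * norm a"
      unfolding y_def by (metis norm_scaleR norm_triangle_ineq4)
    also have "\<dots> \<le> norm x * (1 + norm a / d)"
      using mult_right_mono[OF t norm_ge_zero[of a]] by (simp add: algebra_simps)
    finally have ny: "norm y \<le> norm x * (1 + norm a / d)" .
    have "representation (insert a B) x b = representation B y b + (if b = a then t else 0)"
      unfolding x using representation_insert[OF ind \<open>a \<notin> B\<close> y] .
    then have "\<bar>representation (insert a B) x b\<bar> \<le> \<bar>representation B y b\<bar> + \<bar>t\<bar>"
      by (simp add: abs_triangle_ineq)
    also have "\<dots> \<le> K * (norm x * (1 + norm a / d)) + norm x / d"
      using K(2)[OF y, of b] mult_left_mono[OF ny K(1)] t by linarith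
    also have "\<dots> = K' * norm x"
      unfolding K'_def by (simp add: algebra_simps)
    finally show ?thesis .
  qed
  moreover have "K' \<ge> 0"
    unfolding K'_def using K(1) \<open>d > 0\<close> by simp
  ultimately show ?thesis
    unfolding representation_bounded_def by blast
qed

lemma representation_bounded_finite:
  fixes B :: "'a::real_normed_vector set"
  assumes "finite B" "independent B"
  shows "representation_bounded B"
  using assms
proof (induction B rule: finite_induct)
  case empty
  show ?case
    unfolding representation_bounded_def by (intro exI[of _ 0]) (simp add: representation_zero)
next
  case (insert a B)
  have "independent B"
    using insert.prems by (simp add: independent_insert split: if_splits)
  then have "representation_bounded B"
    using insert.IH by blast
  with insert.hyps(1) \<open>independent B\<close> show ?case
    by (intro representation_bounded_insert[OF insert.prems insert.hyps(2)]
        closed_span_if_representation_bounded)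
qed

lemma finite_spanning_imp_basis:
  assumes "\<exists>B::'a::real_vector set. finite B \<and> span B = UNIV"
  obtains B :: "'a::real_vector set" where "finite B" "independent B" "span B = UNIV"
proof -
  obtain S :: "'a set" where S: "finite S" "span S = UNIV"
    using assms by blast
  obtain B :: "'a set" where B: "independent B" "UNIV \<subseteq> span B"
    by (rule basis_exists[of UNIV]) auto
  show ?thesis
  proof (rule that)
    show "finite B"
      using independent_span_bound[OF S(1) B(1)] by (simp add: S(2))
    show "independent B" "span B = UNIV"
      using B by auto
  qed
qed

lemma finite_dim_Cauchy_convergent:
  fixes X :: "nat \<Rightarrow> 'a::real_normed_vector"
  assumes "\<exists>B::'a set. finite B \<and> span B = UNIV" "Cauchy X"
  shows "convergent X"
proof -
  obtain B :: "'a set" where B: "finite B" "independent B" "span B = UNIV"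
    using finite_spanning_imp_basis[OF assms(1)] .
  show ?thesis
    using Cauchy_in_span_convergent[OF B(1,2) representation_bounded_finite[OF B(1,2)]]
      B(3) assms(2) unfolding convergent_def by blast
qed

lemma finite_dim_linear_imp_bounded_linear:
  fixes f :: "'a::real_normed_vector \<Rightarrow> 'b::real_normed_vector"
  assumes "\<exists>B::'a set. finite B \<and> span B = UNIV" "linear f"
  shows "bounded_linear f"
proof -
  obtain B :: "'a set" where B: "finite B" "independent B" "span B = UNIV"
    using finite_spanning_imp_basis[OF assms(1)] .
  then obtain K where K: "K \<ge> 0" "\<And>x b. \<bar>representation B x b\<bar> \<le> K * norm x"
    using representation_bounded_finite[OF B(1,2)] unfolding representation_bounded_def by auto
  have "norm (f x) \<le> norm x * (K * (\<Sum>b\<in>B. norm (f b)))" for x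
  proof -
    have "f x = f (\<Sum>b\<in>B. representation B x b *\<^sub>R b)"
      using sum_representation_eq[of B x B] B by simp
    also have "\<dots> = (\<Sum>b\<in>B. representation B x b *\<^sub>R f b)"
      using assms(2) by (simp add: linear_sum linear_scale)
    finally have "norm (f x) \<le> (\<Sum>b\<in>B. \<bar>representation B x b\<bar> * norm (f b))"
      using norm_sum[of "\<lambda>b. representation B x b *\<^sub>R f b" B] by simp
    also have "\<dots> \<le> (\<Sum>b\<in>B. (K * norm x) * norm (f b))"
      using K(2) by (intro sum_mono mult_right_mono) auto
    finally show ?thesis
      by (simp add: sum_distrib_left algebra_simps)
  qed
  then show ?thesis
    using assms(2) by (intro bounded_linear_intro) (auto simp: linear_add linear_scale)
qed

lemma finite_dim_countable_dense:
  assumes "\<exists>B::'a::real_normed_vector set. finite B \<and> span B = UNIV"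
  obtains D :: "'a::real_normed_vector set" where "countable D" "\<And>y e. e > 0 \<Longrightarrow> \<exists>d\<in>D. dist y d < e"
proof -
  obtain B :: "'a set" where B: "finite B" "span B = UNIV"
    using assms by blast
  define D where "D = (\<lambda>q. \<Sum>b\<in>B. q b *\<^sub>R b) ` (B \<rightarrow>\<^sub>E \<rat>)"
  have "countable D"
    unfolding D_def using B(1) countable_rat by (intro countable_image countable_PiE) auto
  moreover have "\<exists>d\<in>D. dist y d < e" if "e > 0" for y e
  proof -
    obtain u where y: "y = (\<Sum>b\<in>B. u b *\<^sub>R b)"
      using span_finite[OF B(1)] B(2) by auto
    have "\<exists>q. (\<forall>n. q n \<in> \<rat>) \<and> q \<longlonglongrightarrow> u b" for b
      using Rats_closure_real closure_sequential by blast
    then obtain q where q: "\<And>b n. q b n \<in> \<rat>" "\<And>b. q b \<longlonglongrightarrow> u b"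
      by metis
    have "(\<lambda>n. \<Sum>b\<in>B. q b n *\<^sub>R b) \<longlonglongrightarrow> y"
      unfolding y by (intro tendsto_intros q)
    then obtain n where n: "dist (\<Sum>b\<in>B. q b n *\<^sub>R b) y < e"
      using metric_LIMSEQ_D[OF _ \<open>e > 0\<close>] by blast
    have "(\<Sum>b\<in>B. q b n *\<^sub>R b) = (\<Sum>b\<in>B. restrict (\<lambda>b. q b n) B b *\<^sub>R b)"
      by simp
    then have "(\<Sum>b\<in>B. q b n *\<^sub>R b) \<in> D"
      unfolding D_def using q(1) by (intro image_eqI[of _ _ "restrict (\<lambda>b. q b n) B"]) auto
    with n show ?thesis
      by (auto simp: dist_commute)
  qed
  ultimately show ?thesis
    using that by blast
qed

lemma finite_dim_blinfun:
  assumes "\<exists>B::'a::real_normed_vector set. finite B \<and> span B = UNIV"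
    and "\<exists>B::'b::real_normed_vector set. finite B \<and> span B = UNIV"
  shows "\<exists>B::('a \<Rightarrow>\<^sub>L 'b) set. finite B \<and> span B = UNIV"
proof -
  obtain BX :: "'a set" where BX: "finite BX" "independent BX" "span BX = UNIV"
    using finite_spanning_imp_basis[OF assms(1)] .
  obtain BY :: "'b set" where BY: "finite BY" "independent BY" "span BY = UNIV"
    using finite_spanning_imp_basis[OF assms(2)] .
  have "linear (\<lambda>h. representation BX h b)" for b
    using real_vector.linear_representation[OF BX(2,3)]
    unfolding linear_def real_scaleR_def[abs_def] .
  then have "bounded_linear (\<lambda>h. representation BX h b)" for b
    using assms(1) by (rule finite_dim_linear_imp_bounded_linear[rotated])
  then have bl: "bounded_linear (\<lambda>h. representation BX h b *\<^sub>R v)" for b v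
    by (intro bounded_linear_scaleR_const)
  define e where "e b v = Blinfun (\<lambda>h. representation BX h b *\<^sub>R v)" for b and v :: 'b
  have e: "e b v h = representation BX h b *\<^sub>R v" for b v h
    unfolding e_def by (simp add: bounded_linear_Blinfun_apply[OF bl])
  define E where "E = case_prod e ` (BX \<times> BY)"
  have "L \<in> span E" for L :: "'a \<Rightarrow>\<^sub>L 'b"
  proof -
    have "L = (\<Sum>(b, v)\<in>BX \<times> BY. representation BY (L b) v *\<^sub>R e b v)"
    proof (rule blinfun_eqI)
      fix h
      have "L h = L (\<Sum>b\<in>BX. representation BX h b *\<^sub>R b)"
        using sum_representation_eq[of BX h BX] BX by simp
      also have "\<dots> = (\<Sum>b\<in>BX. representation BX h b *\<^sub>R (\<Sum>v\<in>BY. representation BY (L b) v *\<^sub>R v))"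
        using sum_representation_eq[of BY _ BY] BY
        by (simp add: blinfun.sum_right blinfun.scaleR_right)
      also have "\<dots> = (\<Sum>(b, v)\<in>BX \<times> BY. representation BY (L b) v *\<^sub>R representation BX h b *\<^sub>R v)"
        by (simp add: sum.cartesian_product scaleR_sum_right mult.commute)
      finally show "L h = (\<Sum>(b, v)\<in>BX \<times> BY. representation BY (L b) v *\<^sub>R e b v) h"
        by (simp add: blinfun.sum_left blinfun.scaleR_left e case_prod_beta)
    qed
    also have "\<dots> \<in> span E"
      unfolding E_def by (intro span_sum) (auto intro!: span_scale intro: span_base)
    finally show ?thesis .
  qed
  moreover have "finite E"
    unfolding E_def using BX(1) BY(1) by simp
  ultimately show ?thesis
    by blast
qed

section \<open>Local affine approximation of T\<close>

definition approx_set ::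
  "('a::real_normed_vector \<Rightarrow> 'b::real_normed_vector set) \<Rightarrow> ('a \<Rightarrow> 'b) \<Rightarrow> real \<Rightarrow> real \<Rightarrow> 'a set"
where
  "approx_set T L s r = {x. is_singleton (T x) \<and>
     (\<forall>y w. norm (y - x) < r \<and> w \<in> T y \<longrightarrow> norm (w - the_elem (T x) - L (y - x)) \<le> s * norm (y - x))}"

lemma approx_setI:
  assumes "is_singleton (T x)"
    and "\<And>y w. norm (y - x) < r \<Longrightarrow> w \<in> T y \<Longrightarrow>
      norm (w - the_elem (T x) - L (y - x)) \<le> s * norm (y - x)"
  shows "x \<in> approx_set T L s r"
  using assms unfolding approx_set_def by blast

lemma approx_setD:
  assumes "x \<in> approx_set T L s r"
  shows "is_singleton (T x)"
    and "norm (y - x) < r \<Longrightarrow> w \<in> T y \<Longrightarrow> norm (w - the_elem (T x) - L (y - x)) \<le> s * norm (y - x)"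
  using assms unfolding approx_set_def by blast+

lemma approx_set_mono:
  assumes "s \<le> s'" "r' \<le> r"
  shows "approx_set T L s r \<subseteq> approx_set T L s' r'"
proof
  fix x assume x: "x \<in> approx_set T L s r"
  show "x \<in> approx_set T L s' r'"
  proof (rule approx_setI)
    show "is_singleton (T x)"
      using x by (rule approx_setD)
    fix y w assume "norm (y - x) < r'" "w \<in> T y"
    then have "norm (w - the_elem (T x) - L (y - x)) \<le> s * norm (y - x)"
      using x assms(2) by (intro approx_setD(2)[OF x]) auto
    also have "\<dots> \<le> s' * norm (y - x)"
      using assms(1) by (simp add: mult_right_mono)
    finally show "norm (w - the_elem (T x) - L (y - x)) \<le> s' * norm (y - x)" .
  qed
qed

lemma approx_set_perturb:
  assumes x: "x \<in> approx_set T (blinfun_apply L) s r"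
  shows "x \<in> approx_set T (blinfun_apply M) (s + norm (L - M)) r"
proof (rule approx_setI)
  show "is_singleton (T x)"
    using x by (rule approx_setD)
  fix y w assume "norm (y - x) < r" "w \<in> T y"
  have "norm (w - the_elem (T x) - M (y - x))
      \<le> norm (w - the_elem (T x) - L (y - x)) + norm ((L - M) (y - x))"
    using norm_triangle_ineq[of "w - the_elem (T x) - L (y - x)" "(L - M) (y - x)"]
    by (simp add: blinfun.diff_left)
  also have "\<dots> \<le> s * norm (y - x) + norm (L - M) * norm (y - x)"
    using approx_setD(2)[OF x \<open>norm (y - x) < r\<close> \<open>w \<in> T y\<close>] norm_blinfun
    by (rule add_mono)
  also have "\<dots> = (s + norm (L - M)) * norm (y - x)"
    by (simp add: algebra_simps)
  finally show "norm (w - the_elem (T x) - M (y - x)) \<le> (s + norm (L - M)) * norm (y - x)" .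
qed

lemma linear_norm_le_if_le_on_ball:
  fixes f :: "'a::real_normed_vector \<Rightarrow> 'b::real_normed_vector"
  assumes "linear f" "r > 0" "\<And>h. norm h < r \<Longrightarrow> norm (f h) \<le> s * norm h"
  shows "norm (f h) \<le> s * norm h"
proof (cases "h = 0")
  case True
  then show ?thesis
    using linear_0[OF assms(1)] by simp
next
  case False
  define t where "t = r / (2 * norm h)"
  have "t > 0" "norm (t *\<^sub>R h) < r"
    using False assms(2) by (simp_all add: t_def)
  then have "t * norm (f h) \<le> t * (s * norm h)"
    using assms(3)[of "t *\<^sub>R h"] by (simp add: linear_scale[OF assms(1)])
  with \<open>t > 0\<close> show ?thesis
    by simp
qed

lemma norm_diff_le_if_approx:
  fixes T :: "'a::real_normed_vector \<Rightarrow> 'b::real_normed_vector set"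
  assumes nonempty: "\<And>u. T u \<noteq> {}"
    and L: "x \<in> approx_set T (blinfun_apply L) s r" "r > 0" "s \<ge> 0"
    and M: "x \<in> approx_set T (blinfun_apply M) s' r'" "r' > 0" "s' \<ge> 0"
  shows "norm (L - M) \<le> s + s'"
proof (rule norm_blinfun_bound)
  show "0 \<le> s + s'"
    using L(3) M(3) by simp
  fix h
  show "norm ((L - M) h) \<le> (s + s') * norm h"
  proof (rule linear_norm_le_if_le_on_ball)
    show "linear ((L - M))" "min r r' > 0"
      using L(2) M(2) by (simp_all add: bounded_linear.linear[OF blinfun.bounded_linear_right])
    fix h :: 'a assume h: "norm h < min r r'"
    obtain w where w: "w \<in> T (x + h)"
      using nonempty by blast
    have "norm ((L - M) h) \<le> norm (w - the_elem (T x) - M h) + norm (w - the_elem (T x) - L h)"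
      using norm_triangle_ineq4[of "w - the_elem (T x) - M h" "w - the_elem (T x) - L h"]
      by (simp add: blinfun.diff_left)
    also have "\<dots> \<le> s' * norm h + s * norm h"
      using approx_setD(2)[OF M(1), of "x + h" w] approx_setD(2)[OF L(1), of "x + h" w] h w
      by (intro add_mono) simp_all
    also have "\<dots> = (s + s') * norm h"
      by (simp add: algebra_simps)
    finally show "norm ((L - M) h) \<le> (s + s') * norm h" .
  qed
qed

lemma strongly_diff_with_iff_approx:
  "strongly_diff_with T x L \<longleftrightarrow> linear L \<and> (\<forall>\<epsilon>>0. \<exists>r>0. x \<in> approx_set T L \<epsilon> r)"
proof
  assume sd: "strongly_diff_with T x L"
  have "\<exists>r>0. x \<in> approx_set T L \<epsilon> r" if "\<epsilon> > 0" for \<epsilon>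
  proof -
    obtain \<delta> where "\<delta> > 0" and \<delta>: "\<And>y w. norm (x - y) \<le> \<delta> \<Longrightarrow> w \<in> T y \<Longrightarrow>
        norm (w - the_elem (T x) - L (y - x)) \<le> \<epsilon> * norm (y - x)"
      using sd \<open>\<epsilon> > 0\<close> unfolding strongly_diff_with_def by blast
    have "x \<in> approx_set T L \<epsilon> \<delta>"
      using sd \<delta> by (intro approx_setI) (auto simp: strongly_diff_with_def norm_minus_commute)
    with \<open>\<delta> > 0\<close> show ?thesis
      by blast
  qed
  with sd show "linear L \<and> (\<forall>\<epsilon>>0. \<exists>r>0. x \<in> approx_set T L \<epsilon> r)"
    by (simp add: strongly_diff_with_def)
next
  assume approx: "linear L \<and> (\<forall>\<epsilon>>0. \<exists>r>0. x \<in> approx_set T L \<epsilon> r)"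
  have "\<exists>\<delta>>0. \<forall>y w. norm (x - y) \<le> \<delta> \<and> w \<in> T y \<longrightarrow>
      norm (w - the_elem (T x) - L (y - x)) \<le> \<epsilon> * norm (y - x)" if "\<epsilon> > 0" for \<epsilon>
  proof -
    obtain r where "r > 0" and x: "x \<in> approx_set T L \<epsilon> r"
      using approx \<open>\<epsilon> > 0\<close> by blast
    have "norm (w - the_elem (T x) - L (y - x)) \<le> \<epsilon> * norm (y - x)"
      if "norm (x - y) \<le> r / 2" "w \<in> T y" for y w
      using that \<open>r > 0\<close> by (intro approx_setD(2)[OF x]) (auto simp: norm_minus_commute)
    with \<open>r > 0\<close> show ?thesis
      by (intro exI[of _ "r / 2"]) auto
  qed
  moreover have "is_singleton (T x)"
    using approx approx_setD(1) zero_less_one by blast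
  ultimately show "strongly_diff_with T x L"
    using approx unfolding strongly_diff_with_def by blast
qed

lemma strongly_diff_with_blinfun_unique:
  fixes T :: "'a::real_normed_vector \<Rightarrow> 'b::real_normed_vector set"
  assumes nonempty: "\<And>u. T u \<noteq> {}"
    and "strongly_diff_with T x (blinfun_apply L)" "strongly_diff_with T x (blinfun_apply M)"
  shows "L = M"
proof -
  have "norm (L - M) \<le> 0 + \<epsilon>" if "\<epsilon> > 0" for \<epsilon>
  proof -
    obtain r r' where "r > 0" "x \<in> approx_set T L (\<epsilon> / 2) r"
      and "r' > 0" "x \<in> approx_set T M (\<epsilon> / 2) r'"
      using assms(2,3) \<open>\<epsilon> > 0\<close> half_gt_zero unfolding strongly_diff_with_iff_approx by metis
    then have "norm (L - M) \<le> \<epsilon> / 2 + \<epsilon> / 2"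
      using \<open>\<epsilon> > 0\<close> by (intro norm_diff_le_if_approx[of T x L "\<epsilon> / 2" r M "\<epsilon> / 2" r'] nonempty) auto
    then show ?thesis
      by simp
  qed
  then show ?thesis
    using field_le_epsilon[of "norm (L - M)" 0] by simp
qed

lemma strongly_diff_with_D:
  fixes T :: "'a::real_normed_vector \<Rightarrow> 'b::real_normed_vector set"
  assumes "\<exists>B::'a set. finite B \<and> span B = UNIV" "\<And>u. T u \<noteq> {}" "x \<in> dmn_D T"
  shows "strongly_diff_with T x (blinfun_apply (D T x))"
proof -
  obtain L where L: "strongly_diff_with T x L"
    using assms(3) unfolding dmn_D_def by blast
  then have "bounded_linear L"
    using assms(1) finite_dim_linear_imp_bounded_linear by (auto simp: strongly_diff_with_def)
  then have "strongly_diff_with T x (blinfun_apply (Blinfun L))"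
    using L by (simp add: bounded_linear_Blinfun_apply)
  then have "\<exists>!c. strongly_diff_with T x (blinfun_apply c)"
    using strongly_diff_with_blinfun_unique[of T, OF assms(2)] by blast
  then show ?thesis
    unfolding D_def by (rule theI')
qed

lemma norm_D_diff_le_iff_approx:
  fixes T :: "'a::real_normed_vector \<Rightarrow> 'b::real_normed_vector set"
  assumes "\<exists>B::'a set. finite B \<and> span B = UNIV" "\<And>u. T u \<noteq> {}" "x \<in> dmn_D T" "s \<ge> 0"
  shows "norm (D T x - c) \<le> s \<longleftrightarrow> (\<forall>\<epsilon>>0. \<exists>r>0. x \<in> approx_set T c (s + \<epsilon>) r)"
proof -
  have D: "\<exists>r>0. x \<in> approx_set T (D T x) \<epsilon> r" if "\<epsilon> > 0" for \<epsilon>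
    using strongly_diff_with_D[OF assms(1-3)] that unfolding strongly_diff_with_iff_approx by blast
  show ?thesis
  proof (intro iffI allI impI)
    fix \<epsilon> :: real assume "norm (D T x - c) \<le> s" "\<epsilon> > 0"
    moreover obtain r where "r > 0" "x \<in> approx_set T (D T x) \<epsilon> r"
      using D \<open>\<epsilon> > 0\<close> by blast
    ultimately show "\<exists>r>0. x \<in> approx_set T c (s + \<epsilon>) r"
      using approx_set_perturb[of x T "D T x" \<epsilon> r c]
        approx_set_mono[of "\<epsilon> + norm (D T x - c)" "s + \<epsilon>" r r T c]
      by auto
  next
    assume approx: "\<forall>\<epsilon>>0. \<exists>r>0. x \<in> approx_set T c (s + \<epsilon>) r"
    have "norm (D T x - c) \<le> s + \<epsilon>" if "\<epsilon> > 0" for \<epsilon>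
    proof -
      obtain r r' where "r > 0" "x \<in> approx_set T (D T x) (\<epsilon> / 2) r"
        and "r' > 0" "x \<in> approx_set T c (s + \<epsilon> / 2) r'"
        using D approx \<open>\<epsilon> > 0\<close> half_gt_zero by metis
      then have "norm (D T x - c) \<le> \<epsilon> / 2 + (s + \<epsilon> / 2)"
        using \<open>\<epsilon> > 0\<close> \<open>s \<ge> 0\<close>
        by (intro norm_diff_le_if_approx[of T x "D T x" "\<epsilon> / 2" r c "s + \<epsilon> / 2" r'] assms(2))
          auto
      then show ?thesis
        by simp
    qed
    then show "norm (D T x - c) \<le> s"
      by (rule field_le_epsilon)
  qed
qed

lemma strongly_diff_with_if_approx:
  fixes T :: "'a::real_normed_vector \<Rightarrow> 'b::real_normed_vector set"
  assumes "\<exists>B::('a \<Rightarrow>\<^sub>L 'b) set. finite B \<and> span B = UNIV" "\<And>u. T u \<noteq> {}"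
    and approx: "\<And>\<epsilon>. \<epsilon> > 0 \<Longrightarrow> \<exists>c. \<exists>r>0. x \<in> approx_set T (blinfun_apply c) \<epsilon> r"
  shows "\<exists>L. strongly_diff_with T x (blinfun_apply L)"
proof -
  define e where "e m = inverse (real (Suc m))" for m
  have e: "e \<longlonglongrightarrow> 0" "\<And>m. e m > 0"
    unfolding e_def using LIMSEQ_inverse_real_of_nat by auto
  obtain c r where r: "\<And>m. r m > 0" and c: "\<And>m. x \<in> approx_set T (blinfun_apply (c m)) (e m) (r m)"
    using approx[OF e(2)] by metis
  have dist_c: "dist (c m) (c n) \<le> e m + e n" for m n
    using norm_diff_le_if_approx[of T x "c m" "e m" "r m" "c n" "e n" "r n"] assms(2) c r e(2)
    by (simp add: dist_norm less_imp_le)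
  then have "Cauchy c"
    by (rule Cauchy_if_dist_le_null[OF e(1)])
  then obtain L where L: "c \<longlonglongrightarrow> L"
    using finite_dim_Cauchy_convergent[OF assms(1)] unfolding convergent_def by blast
  have dist_L: "dist (c m) L \<le> e m" for m
  proof (rule LIMSEQ_le)
    show "(\<lambda>n. dist (c m) (c n)) \<longlonglongrightarrow> dist (c m) L"
      by (intro tendsto_intros L)
    show "(\<lambda>n. e m + e n) \<longlonglongrightarrow> e m"
      using tendsto_add[OF tendsto_const e(1)] by simp
    show "\<exists>N. \<forall>n\<ge>N. dist (c m) (c n) \<le> e m + e n"
      using dist_c by blast
  qed
  have "\<exists>r>0. x \<in> approx_set T L \<epsilon> r" if "\<epsilon> > 0" for \<epsilon>
  proof -
    obtain m where "e m < \<epsilon> / 2"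
      using reals_Archimedean[of "\<epsilon> / 2"] \<open>\<epsilon> > 0\<close> unfolding e_def by auto
    have "x \<in> approx_set T L (e m + norm (c m - L)) (r m)"
      using c by (rule approx_set_perturb)
    also have "\<dots> \<subseteq> approx_set T L \<epsilon> (r m)"
      using \<open>e m < \<epsilon> / 2\<close> dist_L[of m] by (intro approx_set_mono) (auto simp: dist_norm)
    finally show ?thesis
      using r by blast
  qed
  then show ?thesis
    unfolding strongly_diff_with_iff_approx
    using bounded_linear.linear[OF blinfun.bounded_linear_right] by blast
qed

lemma dmn_D_eq_approx:
  fixes T :: "'a::real_normed_vector \<Rightarrow> 'b::real_normed_vector set"
  assumes finX: "\<exists>B::'a set. finite B \<and> span B = UNIV"
    and finY: "\<exists>B::'b set. finite B \<and> span B = UNIV"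
    and nonempty: "\<And>u. T u \<noteq> {}"
    and dense: "\<And>L e. e > 0 \<Longrightarrow> \<exists>c\<in>C. dist L c < e"
  shows "dmn_D T = {x. \<forall>\<epsilon>>0. \<exists>c\<in>C. \<exists>r>0. x \<in> approx_set T (blinfun_apply c) \<epsilon> r}"
proof (intro equalityI subsetI)
  fix x assume x: "x \<in> dmn_D T"
  have "\<exists>c\<in>C. \<exists>r>0. x \<in> approx_set T (blinfun_apply c) \<epsilon> r" if "\<epsilon> > 0" for \<epsilon>
  proof -
    obtain c where "c \<in> C" "dist (D T x) c < \<epsilon> / 2"
      using dense \<open>\<epsilon> > 0\<close> half_gt_zero by blast
    obtain r where "r > 0" "x \<in> approx_set T (D T x) (\<epsilon> / 2) r"
      using strongly_diff_with_D[OF finX nonempty x] \<open>\<epsilon> > 0\<close> half_gt_zero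
      unfolding strongly_diff_with_iff_approx by blast
    then have "x \<in> approx_set T c (\<epsilon> / 2 + norm (D T x - c)) r"
      by (intro approx_set_perturb)
    also have "\<dots> \<subseteq> approx_set T c \<epsilon> r"
      using \<open>dist (D T x) c < \<epsilon> / 2\<close> by (intro approx_set_mono) (auto simp: dist_norm)
    finally show ?thesis
      using \<open>c \<in> C\<close> \<open>r > 0\<close> by blast
  qed
  then show "x \<in> {x. \<forall>\<epsilon>>0. \<exists>c\<in>C. \<exists>r>0. x \<in> approx_set T (blinfun_apply c) \<epsilon> r}"
    by blast
next
  fix x assume "x \<in> {x. \<forall>\<epsilon>>0. \<exists>c\<in>C. \<exists>r>0. x \<in> approx_set T (blinfun_apply c) \<epsilon> r}"
  then have "\<exists>L. strongly_diff_with T x (blinfun_apply L)"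
    by (intro strongly_diff_with_if_approx[OF finite_dim_blinfun[OF finX finY] nonempty]) blast
  then show "x \<in> dmn_D T"
    unfolding dmn_D_def by blast
qed

section \<open>Borel sets\<close>

lemma weakly_continuous_at_tendsto:
  assumes "weakly_continuous_at T x" "is_singleton (T x)" "X \<longlonglongrightarrow> x" "\<And>n. w n \<in> T (X n)"
  shows "w \<longlonglongrightarrow> the_elem (T x)"
proof (rule tendstoI)
  fix e :: real assume "e > 0"
  then obtain \<delta> where "\<delta> > 0"
    and \<delta>: "\<And>y. norm (y - x) < \<delta> \<Longrightarrow> T y \<subseteq> {a + v |a v. a \<in> T x \<and> norm v < e}"
    using assms(1) unfolding weakly_continuous_at_def by blast
  have "\<forall>\<^sub>F n in sequentially. norm (X n - x) < \<delta>"
    using tendstoD[OF assms(3) \<open>\<delta> > 0\<close>] by (simp add: dist_norm)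
  then show "\<forall>\<^sub>F n in sequentially. dist (w n) (the_elem (T x)) < e"
  proof eventually_elim
    case (elim n)
    then obtain a v where "w n = a + v" "a \<in> T x" "norm v < e"
      using \<delta> assms(4) by blast
    moreover have "a = the_elem (T x)"
      using assms(2) \<open>a \<in> T x\<close> by (metis is_singleton_the_elem singletonD)
    ultimately show ?case
      by (simp add: dist_norm)
  qed
qed

lemma approx_set_borel:
  assumes "\<And>x. weakly_continuous_at T x" "{x. is_singleton (T x)} \<in> sets borel" "bounded_linear L"
  shows "approx_set T L s r \<in> sets borel"
proof -
  have "{x. is_singleton (T x)} \<inter> closure (approx_set T L s r) \<subseteq> approx_set T L s r"
  proof
    fix x assume "x \<in> {x. is_singleton (T x)} \<inter> closure (approx_set T L s r)"
    then have x: "is_singleton (T x)" and "x \<in> closure (approx_set T L s r)"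
      by auto
    then obtain X where X: "\<And>n. X n \<in> approx_set T L s r" "X \<longlonglongrightarrow> x"
      unfolding closure_sequential by blast
    show "x \<in> approx_set T L s r"
    proof (rule approx_setI)
      show "is_singleton (T x)"
        by (rule x)
      fix y w assume "norm (y - x) < r" "w \<in> T y"
      have "(\<lambda>n. norm (y - X n)) \<longlonglongrightarrow> norm (y - x)"
        by (intro tendsto_intros X)
      then have "\<forall>\<^sub>F n in sequentially. norm (y - X n) < r"
        using \<open>norm (y - x) < r\<close> by (rule order_tendstoD)
      then have ev: "\<forall>\<^sub>F n in sequentially.
          norm (w - the_elem (T (X n)) - L (y - X n)) \<le> s * norm (y - X n)"
        by eventually_elim (use X(1) \<open>w \<in> T y\<close> in \<open>blast intro: approx_setD(2)\<close>)
      have "the_elem (T (X n)) \<in> T (X n)" for n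
        using approx_setD(1)[OF X(1)] by (metis is_singleton_the_elem singletonI)
      then have "(\<lambda>n. the_elem (T (X n))) \<longlonglongrightarrow> the_elem (T x)"
        by (rule weakly_continuous_at_tendsto[OF assms(1) x X(2)])
      then have lhs: "(\<lambda>n. norm (w - the_elem (T (X n)) - L (y - X n)))
          \<longlonglongrightarrow> norm (w - the_elem (T x) - L (y - x))"
        by (intro tendsto_intros bounded_linear.tendsto[OF assms(3)] X(2))
      have rhs: "(\<lambda>n. s * norm (y - X n)) \<longlonglongrightarrow> s * norm (y - x)"
        by (intro tendsto_intros X(2))
      show "norm (w - the_elem (T x) - L (y - x)) \<le> s * norm (y - x)"
        by (rule tendsto_le[OF sequentially_bot rhs lhs ev])
    qed
  qed
  then have "approx_set T L s r = {x. is_singleton (T x)} \<inter> closure (approx_set T L s r)"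
    using closure_subset approx_setD(1) by blast
  also have "\<dots> \<in> sets borel"
    using assms(2) borel_closed[OF closed_closure] by (rule sets.Int)
  finally show ?thesis .
qed

lemma open_values_within_dist:
  assumes "\<And>x. weakly_continuous_at T x"
  shows "open {x. \<exists>r<\<epsilon>. \<forall>a\<in>T x. \<forall>b\<in>T x. dist a b \<le> r}"
  unfolding open_contains_ball
proof
  fix x assume "x \<in> {x. \<exists>r<\<epsilon>. \<forall>a\<in>T x. \<forall>b\<in>T x. dist a b \<le> r}"
  then obtain r where "r < \<epsilon>" and r: "\<And>a b. a \<in> T x \<Longrightarrow> b \<in> T x \<Longrightarrow> dist a b \<le> r"
    by blast
  define \<eta> where "\<eta> = (\<epsilon> - r) / 3"
  have "\<eta> > 0"
    using \<open>r < \<epsilon>\<close> by (simp add: \<eta>_def)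
  then obtain \<delta> where "\<delta> > 0"
    and \<delta>: "\<And>y. norm (y - x) < \<delta> \<Longrightarrow> T y \<subseteq> {a + v |a v. a \<in> T x \<and> norm v < \<eta>}"
    using assms unfolding weakly_continuous_at_def by blast
  have near: "\<exists>a\<in>T x. dist a' a < \<eta>" if y: "y \<in> ball x \<delta>" and a': "a' \<in> T y" for y a'
  proof -
    have "norm (y - x) < \<delta>"
      using y by (simp add: dist_norm norm_minus_commute)
    with a' obtain a v where "a' = a + v" "a \<in> T x" "norm v < \<eta>"
      using \<delta> by blast
    then show ?thesis
      by (intro bexI[of _ a]) (simp_all add: dist_norm)
  qed
  have "dist a' b' \<le> r + 2 * \<eta>" if "y \<in> ball x \<delta>" "a' \<in> T y" "b' \<in> T y" for y a' b'
  proof -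
    obtain a b where "a \<in> T x" "dist a' a < \<eta>" "b \<in> T x" "dist b' b < \<eta>"
      using near \<open>y \<in> ball x \<delta>\<close> \<open>a' \<in> T y\<close> \<open>b' \<in> T y\<close> by meson
    moreover have "dist a' b' \<le> dist a' a + dist a b + dist b' b"
      using dist_triangle[of a' b' a] dist_triangle[of a b' b] by (simp add: dist_commute)
    ultimately show ?thesis
      using r by fastforce
  qed
  moreover have "r + 2 * \<eta> < \<epsilon>"
    using \<open>r < \<epsilon>\<close> by (simp add: \<eta>_def field_simps)
  ultimately show "\<exists>e>0. ball x e \<subseteq> {x. \<exists>r<\<epsilon>. \<forall>a\<in>T x. \<forall>b\<in>T x. dist a b \<le> r}"
    using \<open>\<delta> > 0\<close> by blast
qed

lemma sets_borel_singleton_valued: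
  assumes "\<And>u. T u \<noteq> {}" "\<And>x. weakly_continuous_at T x"
  shows "{x. is_singleton (T x)} \<in> sets borel"
proof -
  define V where "V n = {x. \<exists>r<inverse (real (Suc n)). \<forall>a\<in>T x. \<forall>b\<in>T x. dist a b \<le> r}" for n
  have "{x. is_singleton (T x)} = (\<Inter>n. V n)"
  proof (intro equalityI subsetI)
    fix x assume "x \<in> {x. is_singleton (T x)}"
    then have "\<forall>a\<in>T x. \<forall>b\<in>T x. dist a b \<le> 0"
      by (auto simp: is_singleton_def)
    then show "x \<in> (\<Inter>n. V n)"
      unfolding V_def by force
  next
    fix x assume x: "x \<in> (\<Inter>n. V n)"
    have "a = b" if ab: "a \<in> T x" "b \<in> T x" for a b
    proof (rule ccontr)
      assume "a \<noteq> b"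
      then obtain n where n: "inverse (real (Suc n)) < dist a b"
        using reals_Archimedean[of "dist a b"] by auto
      from x have "x \<in> V n"
        by blast
      then obtain r where "r < inverse (real (Suc n))" "\<forall>a\<in>T x. \<forall>b\<in>T x. dist a b \<le> r"
        unfolding V_def by blast
      with ab n show False
        by fastforce
    qed
    then show "x \<in> {x. is_singleton (T x)}"
      using assms(1)[of x] by (simp add: is_singletonI')
  qed
  also have "\<dots> \<in> sets borel"
    unfolding V_def using open_values_within_dist[OF assms(2)]
    by (intro sets.countable_INT borel_open) auto
  finally show ?thesis .
qed

lemma approx_points_eq_INT_UN:
  "{x. \<forall>\<epsilon>>0. \<exists>c\<in>C. \<exists>r>0. x \<in> approx_set T (blinfun_apply c) (s + \<epsilon>) r}
    = (\<Inter>m. \<Union>c\<in>C. \<Union>k.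
        approx_set T (blinfun_apply c) (s + inverse (real (Suc m))) (inverse (real (Suc k))))"
  (is "?lhs = (\<Inter>m. \<Union>c\<in>C. \<Union>k. ?A m c k)")
proof (intro equalityI subsetI)
  fix x assume x: "x \<in> ?lhs"
  have "x \<in> (\<Union>c\<in>C. \<Union>k. ?A m c k)" for m
  proof -
    have "\<exists>c\<in>C. \<exists>r>0. x \<in> approx_set T (blinfun_apply c) (s + inverse (real (Suc m))) r"
      using x by simp
    then obtain c r where "c \<in> C" "r > 0"
      and "x \<in> approx_set T (blinfun_apply c) (s + inverse (real (Suc m))) r"
      by blast
    moreover obtain k where "inverse (real (Suc k)) < r"
      using reals_Archimedean \<open>r > 0\<close> by blast
    ultimately have "x \<in> ?A m c k"
      using approx_set_mono[OF order_refl, of "inverse (real (Suc k))" r] by auto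
    with \<open>c \<in> C\<close> show ?thesis
      by blast
  qed
  then show "x \<in> (\<Inter>m. \<Union>c\<in>C. \<Union>k. ?A m c k)"
    by blast
next
  fix x assume x: "x \<in> (\<Inter>m. \<Union>c\<in>C. \<Union>k. ?A m c k)"
  have "\<exists>c\<in>C. \<exists>r>0. x \<in> approx_set T (blinfun_apply c) (s + \<epsilon>) r" if "\<epsilon> > 0" for \<epsilon>
  proof -
    obtain m where "inverse (real (Suc m)) < \<epsilon>"
      using reals_Archimedean \<open>\<epsilon> > 0\<close> by blast
    moreover obtain c k where "c \<in> C" "x \<in> ?A m c k"
      using x by blast
    ultimately have "x \<in> approx_set T (blinfun_apply c) (s + \<epsilon>) (inverse (real (Suc k)))"
      using approx_set_mono[of "s + inverse (real (Suc m))" "s + \<epsilon>", OF _ order_refl] by auto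
    with \<open>c \<in> C\<close> show ?thesis
      by (intro bexI[of _ c] exI[of _ "inverse (real (Suc k))"]) auto
  qed
  then show "x \<in> ?lhs"
    by blast
qed

lemma sets_borel_approx_points:
  fixes T :: "'a::real_normed_vector \<Rightarrow> 'b::real_normed_vector set" and C :: "('a \<Rightarrow>\<^sub>L 'b) set"
  assumes "\<And>x. weakly_continuous_at T x" "{x. is_singleton (T x)} \<in> sets borel" "countable C"
  shows "{x. \<forall>\<epsilon>>0. \<exists>c\<in>C. \<exists>r>0. x \<in> approx_set T (blinfun_apply c) (s + \<epsilon>) r} \<in> sets borel"
proof -
  define A where
    "A m c k = approx_set T (blinfun_apply c) (s + inverse (real (Suc m))) (inverse (real (Suc k)))"
    for m c k
  have "A m c k \<in> sets borel" for m c k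
    unfolding A_def using assms(1,2) blinfun.bounded_linear_right by (rule approx_set_borel)
  then have "(\<Union>k. A m c k) \<in> sets borel" for m c
    by (intro sets.countable_UN) auto
  then have "(\<Union>c\<in>C. \<Union>k. A m c k) \<in> sets borel" for m
    by (rule sets.countable_UN''[OF assms(3)])
  then show ?thesis
    unfolding approx_points_eq_INT_UN A_def by (intro sets.countable_INT) auto
qed

lemma measurable_restrict_space_if_cball_preimages:
  fixes f :: "'a \<Rightarrow> 'b::metric_space"
  assumes S: "S \<in> sets M"
    and C: "countable C" "\<And>y e. e > 0 \<Longrightarrow> \<exists>c\<in>C. dist y c < e"
    and cball: "\<And>c r. c \<in> C \<Longrightarrow> r > 0 \<Longrightarrow> {x\<in>S. f x \<in> cball c r} \<in> sets M"
  shows "f \<in> borel_measurable (restrict_space M S)"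
proof (rule borel_measurableI)
  fix U :: "'b set" assume "open U"
  define Q where "Q = {(c, q). c \<in> C \<and> q \<in> \<rat> \<and> q > 0 \<and> cball c q \<subseteq> U}"
  have "f -` U \<inter> S = (\<Union>(c, q)\<in>Q. {x\<in>S. f x \<in> cball c q})"
  proof (intro equalityI subsetI)
    fix x assume x: "x \<in> f -` U \<inter> S"
    obtain e where "e > 0" "ball (f x) e \<subseteq> U"
      using \<open>open U\<close> x openE by blast
    obtain q where "q \<in> \<rat>" "0 < q" "q < e / 2"
      using Rats_dense_in_real[of 0 "e / 2"] \<open>e > 0\<close> by auto
    obtain c where "c \<in> C" "dist (f x) c < q"
      using C(2) \<open>0 < q\<close> by blast
    have "cball c q \<subseteq> ball (f x) e"
    proof
      fix z assume "z \<in> cball c q"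
      then show "z \<in> ball (f x) e"
        using dist_triangle[of "f x" z c] \<open>dist (f x) c < q\<close> \<open>q < e / 2\<close>
        unfolding mem_ball mem_cball by linarith
    qed
    with \<open>ball (f x) e \<subseteq> U\<close> have "(c, q) \<in> Q"
      using \<open>c \<in> C\<close> \<open>q \<in> \<rat>\<close> \<open>0 < q\<close> by (auto simp: Q_def)
    moreover have "f x \<in> cball c q"
      using \<open>dist (f x) c < q\<close> by (simp add: dist_commute)
    ultimately show "x \<in> (\<Union>(c, q)\<in>Q. {x\<in>S. f x \<in> cball c q})"
      using x by blast
  next
    fix x assume "x \<in> (\<Union>(c, q)\<in>Q. {x\<in>S. f x \<in> cball c q})"
    then show "x \<in> f -` U \<inter> S"
      unfolding Q_def by blast
  qed
  also have "\<dots> \<in> sets M"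
  proof (rule sets.countable_UN'')
    have "Q \<subseteq> C \<times> \<rat>"
      unfolding Q_def by blast
    then show "countable Q"
      using countable_SIGMA[OF C(1) countable_rat] by (rule countable_subset)
    fix cq assume "cq \<in> Q"
    then show "(case cq of (c, q) \<Rightarrow> {x\<in>S. f x \<in> cball c q}) \<in> sets M"
      unfolding Q_def using cball by auto
  qed
  finally have "f -` U \<inter> S \<in> sets M" .
  then show "f -` U \<inter> space (restrict_space M S) \<in> sets (restrict_space M S)"
    using S sets.sets_into_space[OF S]
    by (simp add: space_restrict_space sets_restrict_space_iff Int_absorb2)
qed

lemma sets_borel_D_preimage_cball:
  fixes T :: "'a::real_normed_vector \<Rightarrow> 'b::real_normed_vector set"
  assumes "\<exists>B::'a set. finite B \<and> span B = UNIV" "\<And>u. T u \<noteq> {}" "\<And>x. weakly_continuous_at T x"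
    and "{x. is_singleton (T x)} \<in> sets borel" "dmn_D T \<in> sets borel" "s > 0"
  shows "{x \<in> dmn_D T. D T x \<in> cball c s} \<in> sets borel"
proof -
  have "{x \<in> dmn_D T. D T x \<in> cball c s}
      = dmn_D T \<inter> {x. \<forall>\<epsilon>>0. \<exists>c'\<in>{c}. \<exists>r>0. x \<in> approx_set T (blinfun_apply c') (s + \<epsilon>) r}"
    using norm_D_diff_le_iff_approx[OF assms(1,2) _ less_imp_le[OF assms(6)], where c = c]
    by (auto simp: dist_norm norm_minus_commute)
  also have "\<dots> \<in> sets borel"
    using assms(5) sets_borel_approx_points[OF assms(3,4) countable_insert[OF countable_empty]]
    by (rule sets.Int)
  finally show ?thesis .
qed

theorem lemma2p1:
  fixes T :: "'a::real_normed_vector \<Rightarrow> 'b::real_normed_vector set"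
  assumes finX: "\<exists>B::'a set. finite B \<and> span B = UNIV"
    and finY: "\<exists>B::'b set. finite B \<and> span B = UNIV"
    and nonempty: "\<And>u. T u \<noteq> {}"
    and wc: "\<And>x. weakly_continuous_at T x"
  shows "{x. is_singleton (T x)} \<in> sets borel \<and>
         dmn_D T \<in> sets borel \<and>
         D T \<in> borel_measurable (restrict_space borel (dmn_D T))"
proof -
  have singletons: "{x. is_singleton (T x)} \<in> sets borel"
    by (rule sets_borel_singleton_valued[OF nonempty wc])
  obtain C :: "('a \<Rightarrow>\<^sub>L 'b) set" where C: "countable C" "\<And>L e. e > 0 \<Longrightarrow> \<exists>c\<in>C. dist L c < e"
    using finite_dim_countable_dense[OF finite_dim_blinfun[OF finX finY]] by blast
  have "dmn_D T = {x. \<forall>\<epsilon>>0. \<exists>c\<in>C. \<exists>r>0. x \<in> approx_set T (blinfun_apply c) (0 + \<epsilon>) r}"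
    using dmn_D_eq_approx[OF finX finY nonempty C(2)] by simp
  also have "\<dots> \<in> sets borel"
    by (rule sets_borel_approx_points[OF wc singletons C(1)])
  finally have dmn: "dmn_D T \<in> sets borel" .
  have "D T \<in> borel_measurable (restrict_space borel (dmn_D T))"
    using sets_borel_D_preimage_cball[OF finX nonempty wc singletons dmn]
    by (intro measurable_restrict_space_if_cball_preimages[OF dmn C])
  with singletons dmn show ?thesis
    by blast
qed

end
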